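(* Let $n>1$ and $m\geq 1$ be integers with $m\leq n$. Then $\operatorname{ecc}_{Z_{n,m}}(0)=\lfloor\frac{n(m+1)}{2}\rfloor$, i.e. the maximum graph distance in $Z_{n,m}$ from the all-zero vertex $0$ to any vertex equals $\lfloor\frac{n(m+1)}{2}\rfloor$.
   Context: Elements of $\mathbb{Z}_n$ are identified with their representatives in $\{0,\dots,n-1\}$. The dYoke graph $Z_{n,m}$ has as vertices all $u=(u_0,\dots,u_{m+1})\in\mathbb{Z}_n\times\{-1,0,1\}^m\times\mathbb{Z}_n$ with $\sum_{i=0}^{m+1}u_i\equiv0\pmod n$; $u,v$ are adjacent if there is $0\leq i\leq m$ such that $u_j=v_j$ for all $j\notin\{i,i+1\}$ and either ($u_i=v_i+1$, $u_{i+1}=v_{i+1}-1$) or ($u_i=v_i-1$, $u_{i+1}=v_{i+1}+1$), arithmetic in coordinates $0,m+1$ being in $\mathbb{Z}_n$ and in coordinates $1,\dots,m$ in $\mathbb{Z}$. $0$ denotes the vertex $(0,\dots,0)$. *)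

theory Defs
  imports Main "HOL-Library.Extended_Nat"
begin

text \<open>Vertices of the dYoke graph Z_{n,m} are represented as integer lists
  u = [u_0, ..., u_{m+1}] of length m+2, with u_0, u_{m+1} in {0..n-1}
  (representatives of Z_n), u_1..u_m in {-1,0,1}, and sum divisible by n.\<close>

definition dyoke_vertices :: "nat \<Rightarrow> nat \<Rightarrow> int list set" where
  "dyoke_vertices n m = {u. length u = m + 2
      \<and> 0 \<le> u ! 0 \<and> u ! 0 < int n
      \<and> 0 \<le> u ! (m+1) \<and> u ! (m+1) < int n
      \<and> (\<forall>j\<in>{1..m}. u ! j \<in> {-1, 0, 1})
      \<and> sum_list u mod int n = 0}"

definition dyoke_shift :: "nat \<Rightarrow> nat \<Rightarrow> nat \<Rightarrow> int \<Rightarrow> int \<Rightarrow> int" where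
  "dyoke_shift n m j x d = (if j = 0 \<or> j = m + 1 then (x + d) mod int n else x + d)"

definition dyoke_adj :: "nat \<Rightarrow> nat \<Rightarrow> int list \<Rightarrow> int list \<Rightarrow> bool" where
  "dyoke_adj n m u v \<longleftrightarrow> u \<in> dyoke_vertices n m \<and> v \<in> dyoke_vertices n m \<and>
     (\<exists>i\<le>m. (\<forall>j<m+2. j \<noteq> i \<and> j \<noteq> i + 1 \<longrightarrow> u ! j = v ! j) \<and>
        ((u ! i = dyoke_shift n m i (v ! i) 1 \<and> u ! (i+1) = dyoke_shift n m (i+1) (v ! (i+1)) (-1)) \<or>
         (u ! i = dyoke_shift n m i (v ! i) (-1) \<and> u ! (i+1) = dyoke_shift n m (i+1) (v ! (i+1)) 1)))"

inductive dyoke_walk :: "nat \<Rightarrow> nat \<Rightarrow> nat \<Rightarrow> int list \<Rightarrow> int list \<Rightarrow> bool"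
  for n m where
  refl: "u \<in> dyoke_vertices n m \<Longrightarrow> dyoke_walk n m 0 u u"
| step: "dyoke_adj n m u w \<Longrightarrow> dyoke_walk n m k w v \<Longrightarrow> dyoke_walk n m (Suc k) u v"

definition dyoke_dist :: "nat \<Rightarrow> nat \<Rightarrow> int list \<Rightarrow> int list \<Rightarrow> enat" where
  "dyoke_dist n m u v = (INF k \<in> {k. dyoke_walk n m k u v}. enat k)"

definition dyoke_ecc :: "nat \<Rightarrow> nat \<Rightarrow> int list \<Rightarrow> enat" where
  "dyoke_ecc n m u = (SUP v \<in> dyoke_vertices n m. dyoke_dist n m u v)"

end

theory Submission
  imports Defs
begin

text \<open>A walk from 0 to v can be recorded by how often (with sign) it uses each of the m + 1
  edge positions i, i+1; these net counts x form a flow: their differences are the inner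
  coordinates of v and x 0 agrees with the first coordinate modulo n. Each step changes the cost
  \<Sum>|x j| by at most one, and conversely from any vertex with a flow of positive cost one can
  step back to a vertex whose flow is cheaper by one. So the distance from 0 to v is the least
  cost of a flow of v. The flows of v are its partial sums shifted by multiples of n, and a short
  averaging argument bounds the cheapest one by n (m + 1) / 2 when m \<le> n; the vertex with
  first coordinate n div 2 and inner coordinates alternating between -1 and 1 (all 0 for even n)
  attains this bound.\<close>

lemma sum_list_update_ab_group:
  "i < length xs \<Longrightarrow> sum_list (xs[i := a]) = sum_list xs - xs ! i + (a :: 'a :: ab_group_add)"
  by (induction xs arbitrary: i) (auto split: nat.split)

lemma dyoke_shift_inner: "j \<noteq> 0 \<Longrightarrow> j \<noteq> m + 1 \<Longrightarrow> dyoke_shift n m j a d = a + d"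
  by (simp add: dyoke_shift_def)

lemma dyoke_shift_cong: "int n dvd (dyoke_shift n m j a d - (a + d))"
  by (simp add: dyoke_shift_def) (metis dvd_minus_iff dvd_minus_mod minus_diff_eq)

definition dyoke_move :: "nat \<Rightarrow> nat \<Rightarrow> int list \<Rightarrow> nat \<Rightarrow> int \<Rightarrow> int list" where
  "dyoke_move n m v i d =
     v[i := dyoke_shift n m i (v ! i) d, Suc i := dyoke_shift n m (Suc i) (v ! Suc i) (- d)]"

lemma length_dyoke_move [simp]: "length (dyoke_move n m v i d) = length v"
  by (simp add: dyoke_move_def)

lemma nth_dyoke_move:
  assumes "Suc i < length v"
  shows "dyoke_move n m v i d ! j =
    (if j = i then dyoke_shift n m i (v ! i) d
     else if j = Suc i then dyoke_shift n m (Suc i) (v ! Suc i) (- d) else v ! j)"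
  using assms by (simp add: dyoke_move_def nth_list_update)

lemma dyoke_adj_imp_move:
  assumes "dyoke_adj n m u w"
  shows "\<exists>i\<le>m. \<exists>d. (d = 1 \<or> d = -1) \<and> u = dyoke_move n m w i d"
proof -
  from assms obtain i where i: "i \<le> m"
    and same: "\<forall>j<m+2. j \<noteq> i \<and> j \<noteq> i + 1 \<longrightarrow> u ! j = w ! j"
    and moved: "(u ! i = dyoke_shift n m i (w ! i) 1 \<and> u ! (i+1) = dyoke_shift n m (i+1) (w ! (i+1)) (-1)) \<or>
         (u ! i = dyoke_shift n m i (w ! i) (-1) \<and> u ! (i+1) = dyoke_shift n m (i+1) (w ! (i+1)) 1)"
    unfolding dyoke_adj_def by blast
  obtain d :: int where d: "d = 1 \<or> d = -1" and "u ! i = dyoke_shift n m i (w ! i) d"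
    and "u ! Suc i = dyoke_shift n m (Suc i) (w ! Suc i) (- d)"
    using moved by force
  moreover have "length u = m + 2" "length w = m + 2"
    using assms by (auto simp: dyoke_adj_def dyoke_vertices_def)
  ultimately have "u = dyoke_move n m w i d"
    using i same by (intro nth_equalityI) (auto simp: nth_dyoke_move)
  then show ?thesis using i d by blast
qed

lemma dyoke_adj_move:
  assumes "w \<in> dyoke_vertices n m" "dyoke_move n m w i d \<in> dyoke_vertices n m"
    and "i \<le> m" "d = 1 \<or> d = -1"
  shows "dyoke_adj n m (dyoke_move n m w i d) w"
proof -
  have "length w = m + 2" using assms(1) by (simp add: dyoke_vertices_def)
  then show ?thesis
    using assms unfolding dyoke_adj_def by (auto simp: nth_dyoke_move intro!: exI[of _ i])
qed

lemma dyoke_move_in_vertices: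
  assumes v: "v \<in> dyoke_vertices n m" and n: "n > 0" and i: "i \<le> m"
    and inner_i: "1 \<le> i \<Longrightarrow> v ! i + d \<in> {-1, 0, 1}"
    and inner_Suc_i: "Suc i \<le> m \<Longrightarrow> v ! Suc i - d \<in> {-1, 0, 1}"
  shows "dyoke_move n m v i d \<in> dyoke_vertices n m"
proof -
  let ?w = "dyoke_move n m v i d"
  have len: "length v = m + 2" using v by (simp add: dyoke_vertices_def)
  have "int n dvd (sum_list ?w - sum_list v)"
  proof -
    have "sum_list ?w - sum_list v =
        (dyoke_shift n m i (v ! i) d - (v ! i + d)) +
        (dyoke_shift n m (Suc i) (v ! Suc i) (- d) - (v ! Suc i + - d))"
      using len i by (simp add: dyoke_move_def sum_list_update_ab_group nth_list_update)
    then show ?thesis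
      using dyoke_shift_cong[of n m i "v ! i" d] dyoke_shift_cong[of n m "Suc i" "v ! Suc i" "- d"]
      by (metis dvd_add)
  qed
  then have "sum_list ?w mod int n = sum_list v mod int n"
    by (simp add: mod_eq_dvd_iff)
  then have "sum_list ?w mod int n = 0"
    using v by (simp add: dyoke_vertices_def)
  moreover have "0 \<le> ?w ! 0 \<and> ?w ! 0 < int n"
    using v n len i by (cases "i = 0") (auto simp: dyoke_vertices_def nth_dyoke_move dyoke_shift_def)
  moreover have "0 \<le> ?w ! (m + 1) \<and> ?w ! (m + 1) < int n"
    using v n len i by (cases "i = m") (auto simp: dyoke_vertices_def nth_dyoke_move dyoke_shift_def)
  moreover have "?w ! j \<in> {-1, 0, 1}" if j: "j \<in> {1..m}" for j
  proof -
    have "?w ! j = (if j = i then v ! i + d else if j = Suc i then v ! Suc i - d else v ! j)"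
      using len i j by (simp add: nth_dyoke_move dyoke_shift_inner)
    then show ?thesis
      using v j inner_i inner_Suc_i by (auto simp: dyoke_vertices_def)
  qed
  ultimately show ?thesis
    using len by (simp add: dyoke_vertices_def)
qed

text \<open>x j is the net number of moves on the coordinate pair (j, j + 1). The last coordinate of
  v does not occur: for a vertex it is determined by the others through the sum condition.\<close>

definition dyoke_flow :: "nat \<Rightarrow> nat \<Rightarrow> int list \<Rightarrow> (nat \<Rightarrow> int) \<Rightarrow> bool" where
  "dyoke_flow n m v x \<longleftrightarrow> int n dvd (x 0 - v ! 0) \<and> (\<forall>j\<in>{1..m}. v ! j = x j - x (j - 1))"

abbreviation flow_cost :: "nat \<Rightarrow> (nat \<Rightarrow> int) \<Rightarrow> int" where
  "flow_cost m x \<equiv> \<Sum>j\<le>m. \<bar>x j\<bar>"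

lemma dyoke_flow_move_iff:
  assumes len: "length v = m + 2" and i: "i \<le> m"
  shows "dyoke_flow n m (dyoke_move n m v i d) (x(i := x i + d)) \<longleftrightarrow> dyoke_flow n m v x"
proof -
  let ?w = "dyoke_move n m v i d" and ?x = "x(i := x i + d)"
  have "x 0 - v ! 0 = (?x 0 - ?w ! 0) + (if i = 0 then dyoke_shift n m 0 (v ! 0) d - (v ! 0 + d) else 0)"
    using len i by (simp add: nth_dyoke_move)
  moreover have "int n dvd (if i = 0 then dyoke_shift n m 0 (v ! 0) d - (v ! 0 + d) else 0)"
    using dyoke_shift_cong by simp
  ultimately have "int n dvd (?x 0 - ?w ! 0) \<longleftrightarrow> int n dvd (x 0 - v ! 0)"
    by (metis dvd_add_left_iff)
  moreover have "?w ! j = ?x j - ?x (j - 1) \<longleftrightarrow> v ! j = x j - x (j - 1)" if j: "j \<in> {1..m}" for j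
  proof -
    have "?w ! j = v ! j + (if j = i then d else 0) - (if j = Suc i then d else 0)"
      using len i j by (simp add: nth_dyoke_move dyoke_shift_inner)
    moreover have "?x j - ?x (j - 1) = x j - x (j - 1) + (if j = i then d else 0) - (if j = Suc i then d else 0)"
      using j by auto
    ultimately show ?thesis by linarith
  qed
  ultimately show ?thesis
    unfolding dyoke_flow_def by blast
qed

lemma sum_abs_fun_upd:
  fixes x :: "nat \<Rightarrow> int"
  assumes "i \<le> m"
  shows "(\<Sum>j\<le>m. \<bar>(x(i := a)) j\<bar>) = (\<Sum>j\<le>m. \<bar>x j\<bar>) - \<bar>x i\<bar> + \<bar>a\<bar>"
proof -
  have "(\<Sum>j\<le>m. \<bar>(x(i := a)) j\<bar>) = (\<Sum>j\<le>m. \<bar>x j\<bar> + (if j = i then \<bar>a\<bar> - \<bar>x i\<bar> else 0))"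
    by (rule sum.cong) auto
  also have "\<dots> = (\<Sum>j\<le>m. \<bar>x j\<bar>) - \<bar>x i\<bar> + \<bar>a\<bar>"
    using assms by (simp add: sum.distrib)
  finally show ?thesis .
qed

lemma dyoke_walk_flow:
  assumes "dyoke_walk n m k u v" "dyoke_flow n m u x"
  shows "\<exists>y. dyoke_flow n m v y \<and> flow_cost m y \<le> flow_cost m x + int k"
  using assms
proof (induction arbitrary: x rule: dyoke_walk.induct)
  case (refl u)
  then show ?case by auto
next
  case (step u w k v)
  obtain i d where i: "i \<le> m" and d: "d = 1 \<or> d = -1" and u: "u = dyoke_move n m w i d"
    using dyoke_adj_imp_move[OF step.hyps(1)] by blast
  have len: "length w = m + 2"
    using step.hyps(1) by (simp add: dyoke_adj_def dyoke_vertices_def)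
  define x' where "x' = x(i := x i - d)"
  have "x = x'(i := x' i + d)" by (simp add: x'_def)
  then have "dyoke_flow n m w x'"
    using dyoke_flow_move_iff[OF len i] step.prems u by metis
  moreover have "flow_cost m x' \<le> flow_cost m x + 1"
    using sum_abs_fun_upd[OF i, of x "x i - d"] d by (auto simp: x'_def)
  ultimately show ?case
    using step.IH by fastforce
qed

lemma dyoke_flow_zero: "dyoke_flow n m (replicate (m + 2) 0) (\<lambda>_. 0)"
  by (auto simp: dyoke_flow_def simp del: replicate.simps)

lemma dyoke_walk_snoc:
  "dyoke_walk n m k u w \<Longrightarrow> dyoke_adj n m w v \<Longrightarrow> dyoke_walk n m (Suc k) u v"
proof (induction rule: dyoke_walk.induct)
  case (refl u)
  then show ?case
    by (meson dyoke_adj_def dyoke_walk.refl dyoke_walk.step)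
next
  case (step u w k v')
  then show ?case
    using dyoke_walk.step by blast
qed

text \<open>Moving one unit at an edge where d * x is minimal and negative lowers the cost by one
  and keeps the inner coordinates in {-1, 0, 1}.\<close>

lemma dyoke_flow_descent:
  assumes n: "n > 0" and v: "v \<in> dyoke_vertices n m" and x: "dyoke_flow n m v x"
    and cost: "flow_cost m x = int (Suc c)"
  shows "\<exists>w y. w \<in> dyoke_vertices n m \<and> dyoke_adj n m w v \<and> dyoke_flow n m w y \<and> flow_cost m y = int c"
proof -
  obtain j where j: "j \<le> m" "x j \<noteq> 0"
    using cost by (metis (no_types, lifting) abs_0 atMost_iff of_nat_neq_0 sum.neutral)
  obtain d :: int where d: "d = 1 \<or> d = -1" "d * x j < 0"
    using j(2) by (cases "x j > 0") (auto intro: that[of "-1"] that[of 1])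
  define M where "M = Min ((\<lambda>j. d * x j) ` {..m})"
  have "M \<in> (\<lambda>j. d * x j) ` {..m}"
    unfolding M_def by (rule Min_in) auto
  then obtain i where i: "i \<le> m" "d * x i = M"
    by auto
  have min: "d * x i \<le> d * x k" if "k \<le> m" for k
    unfolding i(2) M_def by (rule Min_le) (use that in auto)
  have neg: "d * x i < 0"
    using min[OF j(1)] d(2) by linarith
  have inner: "v ! k \<in> {-1, 0, 1}" "v ! k = x k - x (k - 1)" if "k \<in> {1..m}" for k
    using v x that by (auto simp: dyoke_vertices_def dyoke_flow_def)
  define w where "w = dyoke_move n m v i d"
  have w: "w \<in> dyoke_vertices n m"
    unfolding w_def
  proof (rule dyoke_move_in_vertices[OF v n i(1)])
    show "v ! i + d \<in> {-1, 0, 1}" if "1 \<le> i"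
      using inner[of i] min[of "i - 1"] that i(1) d(1) by (force simp: algebra_simps)
    show "v ! Suc i - d \<in> {-1, 0, 1}" if "Suc i \<le> m"
      using inner[of "Suc i"] min[of "Suc i"] that d(1) by (auto simp: algebra_simps)
  qed
  have len: "length v = m + 2"
    using v by (simp add: dyoke_vertices_def)
  have "dyoke_flow n m w (x(i := x i + d))"
    using dyoke_flow_move_iff[OF len i(1)] x by (simp add: w_def)
  moreover have "flow_cost m (x(i := x i + d)) = int c"
    using sum_abs_fun_upd[OF i(1), of x "x i + d"] cost d(1) neg by auto
  moreover have "dyoke_adj n m w v"
    using dyoke_adj_move[OF v _ i(1) d(1)] w by (simp add: w_def)
  ultimately show ?thesis
    using w by blast
qed

lemma dyoke_flow_cost_zero:
  assumes v: "v \<in> dyoke_vertices n m" and x: "dyoke_flow n m v x" and cost: "flow_cost m x = 0"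
  shows "v = replicate (m + 2) 0"
proof -
  have x0: "x j = 0" if "j \<le> m" for j
    using cost that by (simp add: sum_nonneg_eq_0_iff)
  have len: "length v = m + 2"
    using v by (simp add: dyoke_vertices_def)
  have inner: "v ! j = 0" if "j \<in> {1..m}" for j
    using x that x0 by (auto simp: dyoke_flow_def)
  have "int n dvd v ! 0" "0 \<le> v ! 0" "v ! 0 < int n"
    using v x x0[of 0] by (auto simp: dyoke_vertices_def dyoke_flow_def)
  then have first: "v ! 0 = 0"
    using zdvd_imp_le by fastforce
  have "sum_list v = (\<Sum>j<m + 1. v ! j) + v ! (m + 1)"
    using len by (simp add: sum_list_sum_nth atLeast0LessThan)
  also have "(\<Sum>j<m + 1. v ! j) = 0"
    using first inner by (intro sum.neutral) (metis Suc_eq_plus1 atLeastAtMost_iff lessThan_iff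
        less_Suc_eq_le less_one linorder_not_less)
  finally have "v ! (m + 1) mod int n = 0"
    using v by (simp add: dyoke_vertices_def)
  then have last: "v ! (m + 1) = 0"
    using v by (simp add: dyoke_vertices_def)
  show ?thesis
  proof (rule nth_equalityI)
    show "length v = length (replicate (m + 2) (0 :: int))"
      using len by simp
    fix j assume "j < length v"
    then have "j = 0 \<or> j \<in> {1..m} \<or> j = m + 1"
      using len by auto
    then show "v ! j = replicate (m + 2) 0 ! j"
      using first last inner \<open>j < length v\<close> len by (auto simp del: replicate.simps)
  qed
qed

lemma dyoke_walk_of_flow:
  assumes "n > 0"
  shows "v \<in> dyoke_vertices n m \<Longrightarrow> dyoke_flow n m v x \<Longrightarrow> flow_cost m x = int c \<Longrightarrow>
    dyoke_walk n m c (replicate (m + 2) 0) v"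
proof (induction c arbitrary: v x)
  case 0
  then show ?case
    using dyoke_flow_cost_zero dyoke_walk.refl by fastforce
next
  case (Suc c)
  then obtain w y where "w \<in> dyoke_vertices n m" "dyoke_adj n m w v" "dyoke_flow n m w y"
    "flow_cost m y = int c"
    using dyoke_flow_descent[OF assms] by blast
  then show ?case
    using Suc.IH dyoke_walk_snoc by blast
qed

lemma dyoke_dist_zero_le_flow_cost:
  assumes "n > 0" "v \<in> dyoke_vertices n m" "dyoke_flow n m v x"
  shows "dyoke_dist n m (replicate (m + 2) 0) v \<le> enat (nat (flow_cost m x))"
proof -
  have "flow_cost m x = int (nat (flow_cost m x))"
    by (simp add: sum_nonneg)
  then have "dyoke_walk n m (nat (flow_cost m x)) (replicate (m + 2) 0) v"
    using dyoke_walk_of_flow assms by blast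
  then show ?thesis
    unfolding dyoke_dist_def by (auto intro: INF_lower)
qed

lemma flow_cost_le_dyoke_dist_zero:
  assumes "\<And>x. dyoke_flow n m v x \<Longrightarrow> int c \<le> flow_cost m x"
  shows "enat c \<le> dyoke_dist n m (replicate (m + 2) 0) v"
  unfolding dyoke_dist_def
proof (rule INF_greatest)
  fix k assume "k \<in> {k. dyoke_walk n m k (replicate (m + 2) 0) v}"
  then obtain y where "dyoke_flow n m v y" "flow_cost m y \<le> int k"
    using dyoke_walk_flow[OF _ dyoke_flow_zero] by fastforce
  then show "enat c \<le> enat k"
    using assms by force
qed

lemma unit_steps_abs_diff_le:
  fixes f :: "nat \<Rightarrow> int"
  assumes steps: "\<And>j. j < m \<Longrightarrow> \<bar>f (Suc j) - f j\<bar> \<le> 1" and "i \<le> m" "j \<le> m"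
  shows "\<bar>f j - f i\<bar> \<le> \<bar>int j - int i\<bar>"
proof -
  have "\<bar>f j - f i\<bar> \<le> int (j - i)" if "i \<le> j" "j \<le> m" for i j
    using that
  proof (induction j rule: dec_induct)
    case (step k)
    then show ?case
      using steps[of k] by (simp add: of_nat_diff)
  qed simp
  from this[of i j] this[of j i] assms(2,3) show ?thesis
    by (cases "i \<le> j") (auto simp: abs_minus_commute)
qed

lemma unit_steps_avoiding_multiples:
  fixes f :: "nat \<Rightarrow> int"
  assumes steps: "\<And>j. j < m \<Longrightarrow> \<bar>f (Suc j) - f j\<bar> \<le> 1"
    and start: "0 \<le> f 0" "f 0 < int n"
    and avoid: "\<And>j. j \<le> m \<Longrightarrow> \<not> int n dvd f j"
  shows "j \<le> m \<Longrightarrow> 0 < f j \<and> f j < int n"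
proof (induction j)
  case 0
  then show ?case
    using start avoid[of 0] by (cases "f 0 = 0") auto
next
  case (Suc j)
  have "f (Suc j) \<noteq> 0" "f (Suc j) \<noteq> int n"
    using avoid[OF Suc.prems] by auto
  then show ?case
    using Suc steps[of j] by auto
qed

lemma sum_abs_diff_le:
  fixes i m :: nat
  assumes "i \<le> m"
  shows "2 * (\<Sum>j\<le>m. \<bar>int j - int i\<bar>) \<le> int (m * (m + 1))"
proof -
  let ?g = "\<lambda>j::nat. \<bar>int j - int i\<bar>"
  have "2 * (\<Sum>j\<le>m. ?g j) = (\<Sum>j\<le>m. ?g j + ?g (m - j))"
    using sum.atLeastAtMost_rev[of ?g 0 m] by (simp add: atMost_atLeast0 sum.distrib)
  also have "\<dots> \<le> (\<Sum>j\<le>m. int m)"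
    by (rule sum_mono) (use assms in auto)
  also have "\<dots> = int (m * (m + 1))"
    by (simp add: algebra_simps)
  finally show ?thesis .
qed

lemma dyoke_flow_partial_sums:
  assumes "v \<in> dyoke_vertices n m"
  shows "dyoke_flow n m v (\<lambda>j. v ! 0 + (\<Sum>k = 1..j. v ! k) - int n * q)"
  unfolding dyoke_flow_def
proof (intro conjI ballI)
  fix j :: nat assume "j \<in> {1..m}"
  then obtain i where "j = Suc i" by (cases j) auto
  then show "v ! j = v ! 0 + (\<Sum>k = 1..j. v ! k) - int n * q - (v ! 0 + (\<Sum>k = 1..j - 1. v ! k) - int n * q)"
    by simp
qed simp

text \<open>The flows of v are its partial sums s shifted by multiples of n. If some s i is divisible
  by n, shifting it to 0 costs at most m (m + 1) / 2, as s changes by at most one per edge;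
  otherwise s stays strictly between 0 and n, and the shifts by 0 and by n together cost
  n (m + 1).\<close>

lemma dyoke_flow_cost_bound:
  assumes n: "n > 0" and mn: "m \<le> n" and v: "v \<in> dyoke_vertices n m"
  shows "\<exists>x. dyoke_flow n m v x \<and> 2 * flow_cost m x \<le> int (n * (m + 1))"
proof -
  define s where "s j = v ! 0 + (\<Sum>k = 1..j. v ! k)" for j
  have flows: "dyoke_flow n m v (\<lambda>j. s j - int n * q)" for q
    using dyoke_flow_partial_sums[OF v] by (simp add: s_def)
  have steps: "\<bar>s (Suc j) - s j\<bar> \<le> 1" if "j < m" for j
  proof -
    have "v ! Suc j \<in> {-1, 0, 1}"
      using v that by (simp add: dyoke_vertices_def)
    then show ?thesis
      by (auto simp: s_def)
  qed
  show ?thesis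
  proof (cases "\<exists>i\<le>m. int n dvd s i")
    case True
    then obtain i q where i: "i \<le> m" and q: "s i = int n * q"
      unfolding dvd_def by blast
    have "flow_cost m (\<lambda>j. s j - int n * q) \<le> (\<Sum>j\<le>m. \<bar>int j - int i\<bar>)"
      using unit_steps_abs_diff_le[of m s i, OF steps i] q by (intro sum_mono) auto
    moreover have "int (m * (m + 1)) \<le> int (n * (m + 1))"
      using mn by (simp only: of_nat_le_iff mult_le_mono1)
    ultimately have "2 * flow_cost m (\<lambda>j. s j - int n * q) \<le> int (n * (m + 1))"
      using sum_abs_diff_le[OF i] by linarith
    then show ?thesis
      using flows by blast
  next
    case False
    have between: "0 < s j \<and> s j < int n" if "j \<le> m" for j
      using unit_steps_avoiding_multiples[of m s n, OF steps _ _ _ that] v False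
      by (auto simp: s_def dyoke_vertices_def)
    have "flow_cost m (\<lambda>j. s j - int n * 0) + flow_cost m (\<lambda>j. s j - int n * 1)
        = (\<Sum>j\<le>m. \<bar>s j\<bar> + \<bar>s j - int n\<bar>)"
      by (simp add: sum.distrib)
    also have "\<dots> = (\<Sum>j\<le>m. int n)"
      using between by (intro sum.cong) fastforce+
    also have "\<dots> = int (n * (m + 1))"
      by (simp add: algebra_simps)
    finally have "2 * flow_cost m (\<lambda>j. s j - int n * 0) \<le> int (n * (m + 1)) \<or>
        2 * flow_cost m (\<lambda>j. s j - int n * 1) \<le> int (n * (m + 1))"
      by linarith
    then show ?thesis
      using flows by blast
  qed
qed

definition parity_offset :: "nat \<Rightarrow> nat \<Rightarrow> int" where
  "parity_offset n j = (if odd n then int (j mod 2) else 0)"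

lemma parity_offset_0 [simp]: "parity_offset n 0 = 0"
  by (simp add: parity_offset_def)

definition dyoke_far_vertex :: "nat \<Rightarrow> nat \<Rightarrow> int list" where
  "dyoke_far_vertex n m = map (\<lambda>j.
      if j = 0 then int (n div 2)
      else if j = m + 1 then (- int (n div 2) - parity_offset n m) mod int n
      else parity_offset n j - parity_offset n (j - 1)) [0..<m + 2]"

lemma nth_dyoke_far_vertex:
  "j < m + 2 \<Longrightarrow> dyoke_far_vertex n m ! j =
     (if j = 0 then int (n div 2)
      else if j = m + 1 then (- int (n div 2) - parity_offset n m) mod int n
      else parity_offset n j - parity_offset n (j - 1))"
  unfolding dyoke_far_vertex_def by (simp del: upt_Suc)

lemma dyoke_far_vertex_in_vertices:
  assumes "n > 1"
  shows "dyoke_far_vertex n m \<in> dyoke_vertices n m"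
proof -
  let ?v = "dyoke_far_vertex n m" and ?p = "parity_offset n"
  have len: "length ?v = m + 2"
    by (simp add: dyoke_far_vertex_def)
  have "sum_list ?v = (\<Sum>j<Suc (Suc m). ?v ! j)"
    using len by (simp add: sum_list_sum_nth atLeast0LessThan)
  also have "\<dots> = ?v ! 0 + (\<Sum>j<m. ?v ! Suc j) + ?v ! Suc m"
    by (subst sum.lessThan_Suc, subst sum.lessThan_Suc_shift) simp
  also have "(\<Sum>j<m. ?v ! Suc j) = (\<Sum>j<m. ?p (Suc j) - ?p j)"
    by (rule sum.cong) (simp_all add: nth_dyoke_far_vertex)
  also have "\<dots> = ?p m"
    by (simp add: sum_lessThan_telescope)
  finally have "sum_list ?v = (int (n div 2) + ?p m) + (- (int (n div 2) + ?p m)) mod int n"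
    by (simp add: nth_dyoke_far_vertex)
  then have "sum_list ?v mod int n = 0"
    by (simp add: mod_add_right_eq)
  moreover have "?v ! j \<in> {-1, 0, 1}" if "j \<in> {1..m}" for j
    using that by (auto simp: nth_dyoke_far_vertex parity_offset_def)
  moreover have "0 \<le> ?v ! 0 \<and> ?v ! 0 < int n" "0 \<le> ?v ! (m + 1) \<and> ?v ! (m + 1) < int n"
    using assms by (simp_all add: nth_dyoke_far_vertex)
  ultimately show ?thesis
    using len unfolding dyoke_vertices_def by blast
qed

lemma dyoke_far_vertex_flow:
  assumes "dyoke_flow n m (dyoke_far_vertex n m) x"
  shows "int n dvd (x 0 - int (n div 2))" "j \<le> m \<Longrightarrow> x j = x 0 + parity_offset n j"
proof -
  show "int n dvd (x 0 - int (n div 2))"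
    using assms by (simp add: dyoke_flow_def nth_dyoke_far_vertex)
  show "j \<le> m \<Longrightarrow> x j = x 0 + parity_offset n j"
  proof (induction j)
    case 0
    then show ?case by (simp add: parity_offset_def)
  next
    case (Suc j)
    then have "dyoke_far_vertex n m ! Suc j = x (Suc j) - x j"
      using assms by (simp add: dyoke_flow_def)
    then show ?case
      using Suc by (simp add: nth_dyoke_far_vertex)
  qed
qed

lemma sum_mod_2: "(\<Sum>j\<le>m. int (j mod 2)) = int (Suc m div 2)"
  by (induction m) (simp_all, presburger)

lemma sum_abs_parity_offset_ge:
  assumes n: "n > 0" and t: "int n dvd (t - int (n div 2))"
  shows "int (n * (m + 1) div 2) \<le> (\<Sum>j\<le>m. \<bar>t + parity_offset n j\<bar>)"
proof -
  define h where "h = n div 2"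
  obtain q where q: "t = int h + int n * q"
    using t unfolding h_def dvd_def by (metis add.commute diff_add_cancel)
  have far: "int h \<le> t \<or> t \<le> int h - int n"
  proof (cases "q \<ge> 0")
    case True
    then show ?thesis using q by simp
  next
    case False
    then have "int n * q \<le> int n * (-1)"
      by (intro mult_left_mono) auto
    then show ?thesis using q by simp
  qed
  show ?thesis
  proof (cases "odd n")
    case odd: True
    then have nh: "n = 2 * h + 1"
      by (simp add: h_def)
    have N: "int (n * (m + 1) div 2) = int h * int (m + 1) + int (Suc m div 2)"
    proof -
      have "n * (m + 1) = (m + 1) + 2 * (h * (m + 1))"
        using nh by (simp add: algebra_simps)
      then have "n * (m + 1) div 2 = h * (m + 1) + Suc m div 2"
        by simp
      then show ?thesis
        by (simp add: algebra_simps)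
    qed
    show ?thesis
    proof (cases "int h \<le> t")
      case True
      then have "(\<Sum>j\<le>m. int h + int (j mod 2)) \<le> (\<Sum>j\<le>m. \<bar>t + parity_offset n j\<bar>)"
        using odd by (intro sum_mono) (auto simp: parity_offset_def)
      then show ?thesis
        using N by (simp add: sum.distrib sum_mod_2 mult.commute)
    next
      case False
      then have "(\<Sum>j\<le>m. int h + 1 - int (j mod 2)) \<le> (\<Sum>j\<le>m. \<bar>t + parity_offset n j\<bar>)"
        using odd far nh by (intro sum_mono) (auto simp: parity_offset_def)
      moreover have "(\<Sum>j\<le>m. int h + 1 - int (j mod 2)) = (int h + 1) * int (m + 1) - int (Suc m div 2)"
        by (simp add: sum_subtractf sum.distrib sum_mod_2 algebra_simps)
      moreover have "2 * int (Suc m div 2) \<le> int (m + 1)"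
        by linarith
      ultimately show ?thesis
        using N by (simp add: algebra_simps)
    qed
  next
    case even: False
    then have nh: "n = 2 * h"
      by (simp add: h_def)
    then have "(\<Sum>j\<le>m. int h) \<le> (\<Sum>j\<le>m. \<bar>t + parity_offset n j\<bar>)"
      using far even by (intro sum_mono) (auto simp: parity_offset_def)
    then show ?thesis
      using nh by (simp add: algebra_simps)
  qed
qed

lemma dyoke_far_vertex_flow_cost_ge:
  assumes "n > 0" and x: "dyoke_flow n m (dyoke_far_vertex n m) x"
  shows "int (n * (m + 1) div 2) \<le> flow_cost m x"
proof -
  have "flow_cost m x = (\<Sum>j\<le>m. \<bar>x 0 + parity_offset n j\<bar>)"
  proof (rule sum.cong)
    fix j assume "j \<in> {..m}"
    then show "\<bar>x j\<bar> = \<bar>x 0 + parity_offset n j\<bar>"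
      using dyoke_far_vertex_flow(2)[OF x, of j] by simp
  qed simp
  then show ?thesis
    using sum_abs_parity_offset_ge[OF assms(1) dyoke_far_vertex_flow(1)[OF x], of m] by linarith
qed

theorem theorem5p17:
  fixes n m :: nat
  assumes "n > 1" and "m \<ge> 1" and "m \<le> n"
  shows "dyoke_ecc n m (replicate (m + 2) 0) = enat ((n * (m + 1)) div 2)"
proof -
  have n: "n > 0"
    using assms(1) by simp
  have upper: "dyoke_dist n m (replicate (m + 2) 0) v \<le> enat (n * (m + 1) div 2)"
    if v: "v \<in> dyoke_vertices n m" for v
  proof -
    obtain x where x: "dyoke_flow n m v x" and "2 * flow_cost m x \<le> int (n * (m + 1))"
      using dyoke_flow_cost_bound[OF n assms(3) v] by blast
    then have "nat (flow_cost m x) \<le> n * (m + 1) div 2"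
      by linarith
    then have "enat (nat (flow_cost m x)) \<le> enat (n * (m + 1) div 2)"
      by simp
    with dyoke_dist_zero_le_flow_cost[OF n v x] show ?thesis
      by (rule order_trans)
  qed
  have lower: "enat (n * (m + 1) div 2) \<le> dyoke_dist n m (replicate (m + 2) 0) (dyoke_far_vertex n m)"
    by (rule flow_cost_le_dyoke_dist_zero) (rule dyoke_far_vertex_flow_cost_ge[OF n])
  show ?thesis
    unfolding dyoke_ecc_def
  proof (rule antisym)
    show "(SUP v \<in> dyoke_vertices n m. dyoke_dist n m (replicate (m + 2) 0) v) \<le> enat (n * (m + 1) div 2)"
      by (rule SUP_least) (rule upper)
    show "enat (n * (m + 1) div 2) \<le> (SUP v \<in> dyoke_vertices n m. dyoke_dist n m (replicate (m + 2) 0) v)"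
      using lower SUP_upper[OF dyoke_far_vertex_in_vertices[OF assms(1)]] by (rule order_trans)
  qed
qed

end
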